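(* Let $(X,\pi)$ be a finite symmetric two-player game with relative payoff game $(X,\Delta)$. If $\Delta$ is quasiconcave, then imitation is not subject to a money pump.
   Context: $\pi(x,y)$ is the payoff of the player choosing $x$ against $y$; $\Delta(x,y)=\pi(x,y)-\pi(y,x)$. $\Delta$ is quasiconcave (single-peaked) if there is a total order $\le$ on $X$ such that for each $y\in X$ the function $x\mapsto\Delta(x,y)$ is weakly increasing up to some $k_y\in X$ and weakly decreasing from $k_y$ on. Imitate-the-best: given initial $y_0\in X$ and any opponent sequence $(x_t)_{t\ge0}$, $y_t=x_{t-1}$ if $\Delta(x_{t-1},y_{t-1})>0$ and $y_t=y_{t-1}$ otherwise. Imitation is not subject to a money pump if there is $M\in\mathbb{R}_+$ such that for every $y_0\in X$ and every sequence $(x_t)$, $\limsup_{T\to\infty}\sum_{t=0}^T\Delta(x_t,y_t)\le M$. *)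

theory Defs
  imports "HOL-Analysis.Analysis"
begin

definition rel_payoff :: "('a \<Rightarrow> 'a \<Rightarrow> real) \<Rightarrow> 'a \<Rightarrow> 'a \<Rightarrow> real" where
  "rel_payoff \<pi> x y = \<pi> x y - \<pi> y x"

definition total_order_on :: "'a set \<Rightarrow> ('a \<Rightarrow> 'a \<Rightarrow> bool) \<Rightarrow> bool" where
  "total_order_on X le \<longleftrightarrow>
     (\<forall>x\<in>X. le x x) \<and>
     (\<forall>x\<in>X. \<forall>y\<in>X. le x y \<and> le y x \<longrightarrow> x = y) \<and>
     (\<forall>x\<in>X. \<forall>y\<in>X. \<forall>z\<in>X. le x y \<and> le y z \<longrightarrow> le x z) \<and>
     (\<forall>x\<in>X. \<forall>y\<in>X. le x y \<or> le y x)"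

definition quasiconcave_rel :: "'a set \<Rightarrow> ('a \<Rightarrow> 'a \<Rightarrow> real) \<Rightarrow> bool" where
  "quasiconcave_rel X D \<longleftrightarrow>
     (\<exists>le. total_order_on X le \<and>
        (\<forall>y\<in>X. \<exists>k\<in>X.
           (\<forall>x1\<in>X. \<forall>x2\<in>X. le x1 x2 \<and> le x2 k \<longrightarrow> D x1 y \<le> D x2 y) \<and>
           (\<forall>x1\<in>X. \<forall>x2\<in>X. le k x1 \<and> le x1 x2 \<longrightarrow> D x2 y \<le> D x1 y)))"

fun imitate :: "('a \<Rightarrow> 'a \<Rightarrow> real) \<Rightarrow> 'a \<Rightarrow> (nat \<Rightarrow> 'a) \<Rightarrow> nat \<Rightarrow> 'a" where
  "imitate D y0 xs 0 = y0"
| "imitate D y0 xs (Suc t) =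
     (if D (xs t) (imitate D y0 xs t) > 0 then xs t else imitate D y0 xs t)"

definition no_money_pump :: "'a set \<Rightarrow> ('a \<Rightarrow> 'a \<Rightarrow> real) \<Rightarrow> bool" where
  "no_money_pump X D \<longleftrightarrow>
     (\<exists>M::real. M \<ge> 0 \<and>
        (\<forall>y0\<in>X. \<forall>xs. (\<forall>t. xs t \<in> X) \<longrightarrow>
           limsup (\<lambda>T. ereal (\<Sum>t\<le>T. D (xs t) (imitate D y0 xs t))) \<le> ereal M))"

end

theory Submission
  imports Defs
begin

text \<open>Imitation moves from \<open>y\<close> to \<open>x\<close> exactly when \<open>x\<close> beats \<open>y\<close>. If \<open>\<Delta>\<close> is skew-symmetric and
  single-peaked, this ``beats'' relation has no cycles: on a shortest cycle, the successor of
  a vertex beats no other vertex of the cycle, so by single-peakedness every vertex is the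
  smallest or the largest one, which is absurd once the cycle has three distinct vertices.
  On a finite set the number of strategies reachable by imitation is then a potential that
  drops at every imitation step, so there are at most \<open>|X|\<close> profitable rounds for the
  opponent, each worth at most \<open>max \<Delta>\<close>.\<close>

lemma relpow_chain:
  assumes chain: "\<forall>i<n. (f i, f (Suc i)) \<in> R" and "i \<le> j" "j \<le> n"
  shows "(f i, f j) \<in> R ^^ (j - i)"
  using \<open>i \<le> j\<close> \<open>j \<le> n\<close>
proof (induction j rule: dec_induct)
  case base
  then show ?case by simp
next
  case (step j)
  then have "(f i, f (Suc j)) \<in> R ^^ Suc (j - i)"
    using chain by (intro relpow_Suc_I) auto
  then show ?case using step.hyps by (simp add: Suc_diff_le)
qed

text \<open>A shortest cycle has no chords: the only edge of the cycle ending in \<open>f (Suc j)\<close>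
  starts at \<open>f j\<close>.\<close>

lemma trancl_cycle_chordless:
  assumes "(a, a) \<in> R\<^sup>+"
  obtains n f where "0 < n" "f n = f 0" "\<forall>i<n. (f i, f (Suc i)) \<in> R"
    "\<And>l j. l < n \<Longrightarrow> j < n \<Longrightarrow> (f l, f (Suc j)) \<in> R \<Longrightarrow> l = j"
proof -
  define cycle where "cycle m \<longleftrightarrow> 0 < m \<and> (\<exists>a. (a, a) \<in> R ^^ m)" for m
  have "\<exists>m. cycle m" using assms trancl_power unfolding cycle_def by blast
  then have "cycle (LEAST m. cycle m)" by (rule LeastI_ex)
  then obtain n a where n: "n = (LEAST m. cycle m)" "0 < n" "(a, a) \<in> R ^^ n"
    unfolding cycle_def by blast
  have shortest: "n \<le> m" if "(b, b) \<in> R ^^ m" "0 < m" for b m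
    using that Least_le[of cycle m] n(1) unfolding cycle_def by blast
  obtain f where f: "f 0 = a" "f n = a" and chain: "\<forall>i<n. (f i, f (Suc i)) \<in> R"
    using n(3) relpow_fun_conv by metis
  have "l = j" if "l < n" "j < n" and chord: "(f l, f (Suc j)) \<in> R" for l j
  proof (rule ccontr)
    assume "l \<noteq> j"
    show False
    proof (cases "j < l")
      case True
      have "(f (Suc j), f l) \<in> R ^^ (l - Suc j)"
        using True \<open>l < n\<close> by (intro relpow_chain[OF chain]) auto
      with chord have "(f l, f l) \<in> R ^^ Suc (l - Suc j)" by (rule relpow_Suc_I2)
      with shortest show False using True \<open>l < n\<close> by fastforce
    next
      case False
      have "(f (Suc j), f n) \<in> R ^^ (n - Suc j)" "(f 0, f l) \<in> R ^^ l"
        using \<open>j < n\<close> \<open>l < n\<close> relpow_chain[OF chain, of "Suc j" n] relpow_chain[OF chain, of 0 l]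
        by auto
      then have "(f (Suc j), f l) \<in> R ^^ (n - Suc j + l)" using f by (auto simp: relpow_add)
      with chord have "(f l, f l) \<in> R ^^ Suc (n - Suc j + l)" by (rule relpow_Suc_I2)
      with shortest show False using False \<open>l \<noteq> j\<close> \<open>j < n\<close> by fastforce
    qed
  qed
  from that[OF n(2) _ chain this] f show ?thesis by simp
qed

lemma acyclic_finite_rank:
  assumes "acyclic R" "R \<subseteq> X \<times> X" "finite X"
  obtains r :: "'a \<Rightarrow> nat" where "\<And>a b. (a, b) \<in> R \<Longrightarrow> r b < r a" "\<And>a. r a \<le> card X"
proof
  define r where "r a = card {c. (a, c) \<in> R\<^sup>+}" for a
  have reach_X: "{c. (a, c) \<in> R\<^sup>+} \<subseteq> X" for a
    using trancl_subset_Sigma[OF assms(2)] by auto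
  then show "r a \<le> card X" for a
    unfolding r_def using assms(3) by (rule card_mono[rotated])
  show "r b < r a" if "(a, b) \<in> R" for a b
  proof -
    have "{c. (b, c) \<in> R\<^sup>+} \<subset> {c. (a, c) \<in> R\<^sup>+}"
      using that assms(1) trancl_into_trancl2[of a b R] unfolding acyclic_def by auto
    then show ?thesis
      unfolding r_def using finite_subset[OF reach_X assms(3)] by (rule psubset_card_mono[rotated])
  qed
qed

definition imitation_rel :: "'a set \<Rightarrow> ('a \<Rightarrow> 'a \<Rightarrow> real) \<Rightarrow> 'a rel" where
  "imitation_rel X D = {(y, x). y \<in> X \<and> x \<in> X \<and> 0 < D x y}"

definition single_peaked_on :: "'a set \<Rightarrow> ('a \<Rightarrow> 'a \<Rightarrow> bool) \<Rightarrow> ('a \<Rightarrow> 'a \<Rightarrow> real) \<Rightarrow> bool" where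
  "single_peaked_on X le D \<longleftrightarrow>
     (\<forall>y\<in>X. \<exists>k\<in>X.
        (\<forall>x1\<in>X. \<forall>x2\<in>X. le x1 x2 \<and> le x2 k \<longrightarrow> D x1 y \<le> D x2 y) \<and>
        (\<forall>x1\<in>X. \<forall>x2\<in>X. le k x1 \<and> le x1 x2 \<longrightarrow> D x2 y \<le> D x1 y))"

lemma quasiconcave_rel_iff_single_peaked:
  "quasiconcave_rel X D \<longleftrightarrow> (\<exists>le. total_order_on X le \<and> single_peaked_on X le D)"
  unfolding quasiconcave_rel_def single_peaked_on_def ..

lemma single_peaked_dominates_one_side:
  assumes "total_order_on X le" "single_peaked_on X le D" "y \<in> X" "z \<in> X"
  shows "(\<forall>x\<in>X. le x z \<longrightarrow> D x y \<le> D z y) \<or> (\<forall>x\<in>X. le z x \<longrightarrow> D x y \<le> D z y)"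
proof -
  obtain k where "k \<in> X"
    and inc: "\<forall>x1\<in>X. \<forall>x2\<in>X. le x1 x2 \<and> le x2 k \<longrightarrow> D x1 y \<le> D x2 y"
    and dec: "\<forall>x1\<in>X. \<forall>x2\<in>X. le k x1 \<and> le x1 x2 \<longrightarrow> D x2 y \<le> D x1 y"
    using assms(2,3) unfolding single_peaked_on_def by blast
  have "le z k \<or> le k z" using assms(1,4) \<open>k \<in> X\<close> unfolding total_order_on_def by blast
  then show ?thesis using inc dec \<open>z \<in> X\<close> by blast
qed

lemma chordless_imitation_cycle_extremal:
  assumes skew: "\<And>a b. D a b = - D b a"
    and order: "total_order_on X le" and peaked: "single_peaked_on X le D"
    and chain: "\<forall>i<n. (f i, f (Suc i)) \<in> imitation_rel X D"
    and chordless: "\<And>l j. l < n \<Longrightarrow> j < n \<Longrightarrow> (f l, f (Suc j)) \<in> imitation_rel X D \<Longrightarrow> l = j"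
    and "j < n"
  shows "(\<forall>l<n. le (f j) (f l)) \<or> (\<forall>l<n. le (f l) (f j))"
proof -
  let ?y = "f (Suc j)"
  have fX: "f i \<in> X" if "i < n" for i
    using chain that by (auto simp: imitation_rel_def)
  have "?y \<in> X" "0 < D ?y (f j)"
    using chain \<open>j < n\<close> by (auto simp: imitation_rel_def)
  have only_j: "l = j" if "l < n" "D (f l) ?y \<le> D (f j) ?y" for l
  proof (rule chordless[OF \<open>l < n\<close> \<open>j < n\<close>])
    have "0 < D ?y (f l)"
      using \<open>0 < D ?y (f j)\<close> that(2) skew[of ?y "f l"] skew[of ?y "f j"] by linarith
    then show "(f l, ?y) \<in> imitation_rel X D"
      using fX[OF \<open>l < n\<close>] \<open>?y \<in> X\<close> unfolding imitation_rel_def by blast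
  qed
  have comparable: "le (f l) (f j) \<or> le (f j) (f l)" if "l < n" for l
    using order fX[OF that] fX[OF \<open>j < n\<close>] unfolding total_order_on_def by blast
  from single_peaked_dominates_one_side[OF order peaked \<open>?y \<in> X\<close> fX[OF \<open>j < n\<close>]]
  show ?thesis
  proof
    assume below: "\<forall>x\<in>X. le x (f j) \<longrightarrow> D x ?y \<le> D (f j) ?y"
    have "le (f j) (f l)" if "l < n" for l
      using comparable[OF that] only_j[OF that] bspec[OF below fX[OF that]] by auto
    then show ?thesis by blast
  next
    assume above: "\<forall>x\<in>X. le (f j) x \<longrightarrow> D x ?y \<le> D (f j) ?y"
    have "le (f l) (f j)" if "l < n" for l
      using comparable[OF that] only_j[OF that] bspec[OF above fX[OF that]] by auto
    then show ?thesis by blast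
  qed
qed

lemma acyclic_imitation_rel:
  assumes skew: "\<And>a b. D a b = - D b a" and "quasiconcave_rel X D"
  shows "acyclic (imitation_rel X D)"
proof (intro acyclicI allI notI)
  fix a assume "(a, a) \<in> (imitation_rel X D)\<^sup>+"
  then obtain n f where "0 < n" "f n = f 0" and chain: "\<forall>i<n. (f i, f (Suc i)) \<in> imitation_rel X D"
    and chordless: "\<And>l j. l < n \<Longrightarrow> j < n \<Longrightarrow> (f l, f (Suc j)) \<in> imitation_rel X D \<Longrightarrow> l = j"
    by (rule trancl_cycle_chordless) blast
  obtain le where order: "total_order_on X le" and peaked: "single_peaked_on X le D"
    using assms(2) unfolding quasiconcave_rel_iff_single_peaked by blast
  note extremal = chordless_imitation_cycle_extremal[OF skew order peaked chain chordless]
  have fX: "f i \<in> X" and beaten: "D (f (Suc i)) (f i) > 0" if "i < n" for i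
    using chain that by (auto simp: imitation_rel_def)
  have "n \<noteq> 1"
  proof
    assume "n = 1"
    then have "D (f 0) (f 0) > 0" using beaten[of 0] \<open>f n = f 0\<close> by simp
    then show False using skew[of "f 0" "f 0"] by linarith
  qed
  moreover have "n \<noteq> 2"
  proof
    assume "n = 2"
    then have "D (f 1) (f 0) > 0" "D (f 0) (f 1) > 0"
      using beaten[of 0] beaten[of 1] \<open>f n = f 0\<close> by (simp_all add: numeral_2_eq_2)
    then show False using skew[of "f 0" "f 1"] by linarith
  qed
  ultimately have three: "0 < n" "1 < n" "2 < n" using \<open>0 < n\<close> by auto
  have same_extreme: "i = j" if "i < n" "j < n" "le (f i) (f j)" "le (f j) (f i)" for i j
  proof -
    have "f i = f j"
      using order fX[OF that(1)] fX[OF that(2)] that(3,4) unfolding total_order_on_def by blast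
    then show ?thesis
      using chordless[OF that(1,2)] chain that(2) by simp
  qed
  show False
    using extremal[of 0] extremal[of 1] extremal[of 2] three
      same_extreme[of 0 1] same_extreme[of 0 2] same_extreme[of 1 2] by auto
qed

lemma imitate_in:
  assumes "y0 \<in> X" "\<forall>t. xs t \<in> X"
  shows "imitate D y0 xs t \<in> X"
  using assms by (induction t) auto

lemma payoff_le_potential_drop:
  fixes r :: "'a \<Rightarrow> nat"
  assumes decreasing: "\<And>a b. (a, b) \<in> imitation_rel X D \<Longrightarrow> r b < r a"
    and bounded: "\<And>a b. a \<in> X \<Longrightarrow> b \<in> X \<Longrightarrow> D a b \<le> B" and "0 \<le> B"
    and "x \<in> X" "y \<in> X"
  shows "D x y \<le> B * (real (r y) - real (r (if 0 < D x y then x else y)))"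
proof (cases "0 < D x y")
  case True
  then have "(y, x) \<in> imitation_rel X D" using assms(4,5) by (simp add: imitation_rel_def)
  then have "1 \<le> real (r y) - real (r x)" using decreasing by fastforce
  then have "B \<le> B * (real (r y) - real (r x))" using mult_left_mono[OF _ \<open>0 \<le> B\<close>] by fastforce
  then have "D x y \<le> B * (real (r y) - real (r x))" using bounded[OF assms(4,5)] by linarith
  then show ?thesis using True by simp
qed simp

lemma no_money_pump_if_acyclic:
  assumes "finite X" and acyclic: "acyclic (imitation_rel X D)"
  shows "no_money_pump X D"
proof -
  have "imitation_rel X D \<subseteq> X \<times> X" by (auto simp: imitation_rel_def)
  then obtain r where decreasing: "\<And>a b. (a, b) \<in> imitation_rel X D \<Longrightarrow> r b < r a"
    and rank_le: "\<And>a. r a \<le> card X"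
    using acyclic_finite_rank[OF acyclic _ \<open>finite X\<close>] by blast
  define B where "B = Max (insert 0 ((\<lambda>(a, b). D a b) ` (X \<times> X)))"
  have "0 \<le> B" unfolding B_def using \<open>finite X\<close> by (intro Max_ge) auto
  have bounded: "D a b \<le> B" if "a \<in> X" "b \<in> X" for a b
    unfolding B_def using \<open>finite X\<close> that by (intro Max_ge) auto
  show ?thesis unfolding no_money_pump_def
  proof (intro exI conjI ballI allI impI)
    show "0 \<le> B * real (card X)" using \<open>0 \<le> B\<close> by simp
    fix y0 and xs :: "nat \<Rightarrow> 'a" assume "y0 \<in> X" "\<forall>t. xs t \<in> X"
    define y where "y = imitate D y0 xs"
    have "(\<Sum>t\<le>T. D (xs t) (y t)) \<le> B * real (card X)" for T
    proof -
      have "D (xs t) (y t) \<le> B * (real (r (y t)) - real (r (y (Suc t))))" for t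
        using payoff_le_potential_drop[where X = X and D = D and r = r and x = "xs t" and y = "y t",
            OF decreasing bounded \<open>0 \<le> B\<close>]
          imitate_in[OF \<open>y0 \<in> X\<close> \<open>\<forall>t. xs t \<in> X\<close>] \<open>\<forall>t. xs t \<in> X\<close>
        unfolding y_def by simp
      then have "(\<Sum>t\<le>T. D (xs t) (y t)) \<le> (\<Sum>t\<le>T. B * (real (r (y t)) - real (r (y (Suc t)))))"
        by (rule sum_mono)
      also have "\<dots> = B * (real (r (y 0)) - real (r (y (Suc T))))"
        by (simp add: sum_distrib_left[symmetric] sum_telescope[of "\<lambda>t. real (r (y t))"])
      also have "\<dots> \<le> B * real (card X)"
        using \<open>0 \<le> B\<close> rank_le[of y0] unfolding y_def by (intro mult_left_mono) auto
      finally show ?thesis .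
    qed
    then show "limsup (\<lambda>T. ereal (\<Sum>t\<le>T. D (xs t) (imitate D y0 xs t))) \<le> ereal (B * real (card X))"
      unfolding y_def by (intro Limsup_bounded always_eventually) auto
  qed
qed

theorem proposition5:
  fixes X :: "'a set" and \<pi> :: "'a \<Rightarrow> 'a \<Rightarrow> real"
  assumes "finite X" and "X \<noteq> {}"
    and "quasiconcave_rel X (rel_payoff \<pi>)"
  shows "no_money_pump X (rel_payoff \<pi>)"
proof (rule no_money_pump_if_acyclic[OF \<open>finite X\<close>])
  have "rel_payoff \<pi> a b = - rel_payoff \<pi> b a" for a b
    unfolding rel_payoff_def by simp
  then show "acyclic (imitation_rel X (rel_payoff \<pi>))"
    using assms(3) by (rule acyclic_imitation_rel)
qed

end
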